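(* Let $q\ge 2$, $n\ge 1$, $h\in F(n,q)$ and $k=\kappa^{\min}(h)$. Then $$\mathcal{L}^*(h)=\mathcal{L}(h\,|\,n+k)=\Omega(h)+k .$$
   Context: Let $q\ge 2$, $A=\{0,1,\dots,q-1\}$, $[n]=\{1,\dots,n\}$, and let $F(n,q)$ be the set of all maps $A^n\to A^n$. For $f\in F(m,q)$ and $i\in[m]$, $f_i$ is the $i$-th coordinate function and $f^i(x)=(x_1,\dots,x_{i-1},f_i(x),x_{i+1},\dots,x_m)$; for a word $w=(w_1,\dots,w_t)$ over $[m]$, $f^w=f^{w_t}\circ\cdots\circ f^{w_1}$. $\Pi([m])$ is the set of permutations of $[m]$ written as words $(w_1,\dots,w_m)$. $\mathrm{pr}_{[n]}:A^m\to A^n$ is the projection onto the first $n$ coordinates. For $m\ge n$, $(f,w)$ with $f\in F(m,q)$, $w\in\Pi([m])$ sequentializes $h\in F(n,q)$ if $\mathrm{pr}_{[n]}\circ f^w=h\circ\mathrm{pr}_{[n]}$. $\kappa^{\min}(h)$ is the smallest $k\ge 0$ such that there exist $f\in F(n+k,q)$ and $w\in\Pi([n+k])$ with $(f,w)$ sequentializing $h$. A coordinate function $h_i$ is trivial if $h_i(x)=x_i$ for all $x$; $\Omega(h)$ is the number of $i\in[n]$ such that $h_i$ is not trivial. $F^*(m,q)$ is the set of $g\in F(m,q)$ that update at most one coordinate, i.e. there is $i\in[m]$ with $g_j(x)=x_j$ for all $j\ne i$ and all $x\in A^m$. For $m\ge n$, $\mathcal{L}(h\,|\,m)$ is the smallest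 $t\ge 0$ such that there exist $g^{(1)},\dots,g^{(t)}\in F^*(m,q)$ with $\mathrm{pr}_{[n]}\circ g^{(t)}\circ\cdots\circ g^{(1)}=h\circ\mathrm{pr}_{[n]}$, and $\mathcal{L}^*(h)=\min\{\mathcal{L}(h\,|\,m): m\ge n\}$. *)

theory Defs
  imports Main
begin

text \<open>Elements of A^m (A = {0..q-1}) are represented as lists of length m with
  entries < q. Coordinates are 0-based: paper coordinate i corresponds to list index i-1.\<close>

definition states :: "nat \<Rightarrow> nat \<Rightarrow> nat list set" where
  "states q m = {x. length x = m \<and> (\<forall>i<m. x ! i < q)}"

text \<open>f is (a representative of) an element of F(m,q): it maps A^m into A^m.
  Only its values on A^m matter.\<close>
definition is_map :: "nat \<Rightarrow> nat \<Rightarrow> (nat list \<Rightarrow> nat list) \<Rightarrow> bool" where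
  "is_map q m f = (\<forall>x\<in>states q m. f x \<in> states q m)"

definition upd :: "(nat list \<Rightarrow> nat list) \<Rightarrow> nat \<Rightarrow> nat list \<Rightarrow> nat list" where
  "upd f i x = x[i := f x ! i]"

definition seq_apply :: "(nat list \<Rightarrow> nat list) \<Rightarrow> nat list \<Rightarrow> nat list \<Rightarrow> nat list" where
  "seq_apply f w x = fold (\<lambda>i y. upd f i y) w x"

definition is_perm_word :: "nat \<Rightarrow> nat list \<Rightarrow> bool" where
  "is_perm_word m w = (distinct w \<and> set w = {..<m})"

definition sequentializes ::
  "nat \<Rightarrow> nat \<Rightarrow> nat \<Rightarrow> (nat list \<Rightarrow> nat list) \<Rightarrow> (nat list \<Rightarrow> nat list) \<Rightarrow> nat list \<Rightarrow> bool" where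
  "sequentializes q n m h f w =
     (n \<le> m \<and> is_map q m f \<and> is_perm_word m w \<and>
      (\<forall>x\<in>states q m. take n (seq_apply f w x) = h (take n x)))"

definition kappa_min :: "nat \<Rightarrow> nat \<Rightarrow> (nat list \<Rightarrow> nat list) \<Rightarrow> nat" where
  "kappa_min q n h = (LEAST k. \<exists>f w. sequentializes q n (n + k) h f w)"

definition Omega :: "nat \<Rightarrow> nat \<Rightarrow> (nat list \<Rightarrow> nat list) \<Rightarrow> nat" where
  "Omega q n h = card {i. i < n \<and> \<not> (\<forall>x\<in>states q n. h x ! i = x ! i)}"

definition single_update :: "nat \<Rightarrow> nat \<Rightarrow> (nat list \<Rightarrow> nat list) \<Rightarrow> bool" where
  "single_update q m g = (is_map q m g \<and>
     (\<exists>i<m. \<forall>x\<in>states q m. \<forall>j<m. j \<noteq> i \<longrightarrow> g x ! j = x ! j))"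

definition computes_with ::
  "nat \<Rightarrow> nat \<Rightarrow> (nat list \<Rightarrow> nat list) \<Rightarrow> nat \<Rightarrow> nat \<Rightarrow> bool" where
  "computes_with q n h m t =
     (\<exists>gs. length gs = t \<and> (\<forall>g\<in>set gs. single_update q m g) \<and>
        (\<forall>x\<in>states q m. take n (fold (\<lambda>g y. g y) gs x) = h (take n x)))"

definition L :: "nat \<Rightarrow> nat \<Rightarrow> (nat list \<Rightarrow> nat list) \<Rightarrow> nat \<Rightarrow> nat" where
  "L q n h m = (LEAST t. computes_with q n h m t)"

definition Lstar :: "nat \<Rightarrow> nat \<Rightarrow> (nat list \<Rightarrow> nat list) \<Rightarrow> nat" where
  "Lstar q n h = (LEAST t. \<exists>m\<ge>n. computes_with q n h m t)"

end

theory Submission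
  imports Defs
begin

text \<open>
  Upper bound: take a sequentialization (f, w) of h on n + \<kappa> coordinates, \<kappa> = \<kappa>_min(h).
  When the update of a coordinate i < n with trivial h_i fires, coordinate i still holds x_i and
  must end up holding x_i, so this update is the identity; dropping these updates leaves a
  program of \<Omega>(h) + \<kappa> single-coordinate updates on n + \<kappa> coordinates.

  Lower bound: take any program g_1, ..., g_t of single-coordinate updates on m \<ge> n coordinates.
  Call step s final if it is the last step writing a coordinate i < n; every nontrivial h_i needs
  such a step. Give each final step the slot i and each of the K non-final steps its own new slot
  beyond n. On these n + K coordinates, the update of the slot of step s recomputes g_s on the
  state of the program before step s, which can be replayed from the slots already written.
  Performing the slot updates in the order of the steps sequentializes h, so
  \<kappa> \<le> K \<le> t - \<Omega>(h).
\<close>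

lemma length_upd [simp]: "length (upd f i x) = length x"
  by (simp add: upd_def)

lemma length_fold_upd [simp]: "length (fold (upd f) ws x) = length x"
  by (induction ws arbitrary: x) auto

lemma fold_upd_nth_notin: "i \<notin> set ws \<Longrightarrow> fold (upd f) ws x ! i = x ! i"
  by (induction ws arbitrary: x) (auto simp: upd_def)

lemma fold_upd_fixpoint: "\<forall>i\<in>set ws. upd f i x = x \<Longrightarrow> fold (upd f) ws x = x"
  by (induction ws) auto

lemma fold_upd_reads_outside:
  assumes "\<And>i z. i \<in> set ws \<Longrightarrow> length z = length x \<Longrightarrow> (\<forall>j. j \<notin> set ws \<longrightarrow> z ! j = x ! j)
             \<Longrightarrow> f z ! i = v ! i"
    and "j < length x"
  shows "fold (upd f) ws x ! j = (if j \<in> set ws then v ! j else x ! j)"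
  using assms
proof (induction ws arbitrary: x)
  case Nil
  then show ?case by simp
next
  case (Cons i ws)
  let ?x' = "upd f i x"
  have "f x ! i = v ! i" using Cons.prems(1)[of i x] by simp
  then have x': "?x' ! j = (if j = i then v ! j else x ! j)" if "j < length x" for j
    using that by (simp add: upd_def)
  have "fold (upd f) ws ?x' ! j = (if j \<in> set ws then v ! j else ?x' ! j)"
  proof (rule Cons.IH)
    fix i' z assume "i' \<in> set ws" "length z = length ?x'" "\<forall>j. j \<notin> set ws \<longrightarrow> z ! j = ?x' ! j"
    then show "f z ! i' = v ! i'"
      using Cons.prems(1)[of i' z] x' by (simp add: upd_def nth_list_update)
  qed (use Cons.prems in simp)
  then show ?case using x' Cons.prems(2) by auto
qed

lemma fold_filter_skip_identities:
  assumes "\<forall>j<length w. \<not> P (w ! j) \<longrightarrow> g (w ! j) (fold g (take j w) x) = fold g (take j w) x"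
  shows "fold g (filter P w) x = fold g w x"
  using assms
proof (induction w rule: rev_induct)
  case Nil
  then show ?case by simp
next
  case (snoc a w)
  have "fold g (filter P w) x = fold g w x"
  proof (rule snoc.IH, intro allI impI)
    fix j assume "j < length w" "\<not> P (w ! j)"
    then show "g (w ! j) (fold g (take j w) x) = fold g (take j w) x"
      using snoc.prems[rule_format, of j] by (simp add: nth_append)
  qed
  moreover have "\<not> P a \<Longrightarrow> g a (fold g w x) = fold g w x"
    using snoc.prems[rule_format, of "length w"] by simp
  ultimately show ?case by auto
qed

subsection \<open>From sequentializations to programs\<close>

lemma upd_trivial_coordinate:
  assumes sq: "sequentializes q n m h f w"
    and x: "x \<in> states q m" and i: "i < n" "\<forall>y\<in>states q n. h y ! i = y ! i"
    and w: "w = u @ i # v"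
  shows "upd f i (fold (upd f) u x) = fold (upd f) u x"
proof -
  define z where "z = fold (upd f) u x"
  have "distinct w" "n \<le> m" and lx: "length x = m"
    using sq x by (auto simp: sequentializes_def is_perm_word_def states_def)
  then have notin: "i \<notin> set u" "i \<notin> set v" and im: "i < m" using w i by auto
  have "f z ! i = fold (upd f) v (upd f i z) ! i"
    using fold_upd_nth_notin[OF notin(2)] im lx by (simp add: upd_def z_def)
  also have "\<dots> = take n (seq_apply f w x) ! i"
    using i by (simp add: seq_apply_def w z_def)
  also have "\<dots> = h (take n x) ! i"
    using sq x by (simp add: sequentializes_def)
  also have "\<dots> = x ! i"
    using i x \<open>n \<le> m\<close> by (auto simp: states_def)
  also have "\<dots> = z ! i"
    using fold_upd_nth_notin[OF notin(1)] by (simp add: z_def)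
  finally show ?thesis by (simp add: upd_def z_def)
qed

lemma Omega_add_trivial:
  "Omega q n h + card {i. i < n \<and> (\<forall>x\<in>states q n. h x ! i = x ! i)} = n"
proof -
  have "{..<n} = {i. i < n \<and> \<not> (\<forall>x\<in>states q n. h x ! i = x ! i)}
      \<union> {i. i < n \<and> (\<forall>x\<in>states q n. h x ! i = x ! i)}" by auto
  then have "n = card ({i. i < n \<and> \<not> (\<forall>x\<in>states q n. h x ! i = x ! i)}
      \<union> {i. i < n \<and> (\<forall>x\<in>states q n. h x ! i = x ! i)})" by (metis card_lessThan)
  also have "\<dots> = Omega q n h + card {i. i < n \<and> (\<forall>x\<in>states q n. h x ! i = x ! i)}"
    unfolding Omega_def by (rule card_Un_disjoint) auto
  finally show ?thesis by simp
qed

lemma single_update_upd: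
  assumes "is_map q m f" "i < m"
  shows "single_update q m (upd f i)"
proof -
  have "is_map q m (upd f i)"
    using assms by (auto simp: is_map_def states_def upd_def nth_list_update)
  then show ?thesis using assms(2) by (auto simp: single_update_def upd_def)
qed

lemma computes_with_sequentialization:
  assumes sq: "sequentializes q n (n + k) h f w"
  shows "computes_with q n h (n + k) (Omega q n h + k)"
proof -
  define P where "P i \<longleftrightarrow> \<not> (i < n \<and> (\<forall>x\<in>states q n. h x ! i = x ! i))" for i
  define gs where "gs = map (upd f) (filter P w)"
  have dw: "distinct w" and sw: "set w = {..<n+k}" and fm: "is_map q (n + k) f"
    using sq by (auto simp: sequentializes_def is_perm_word_def)
  have "length gs = card (set w \<inter> {i. P i})"
    using distinct_length_filter[OF dw] by (simp add: gs_def Int_commute)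
  also have "set w \<inter> {i. P i} = {..<n+k} - {i. i < n \<and> (\<forall>x\<in>states q n. h x ! i = x ! i)}"
    using sw by (auto simp: P_def)
  also have "card \<dots> = Omega q n h + k"
    using Omega_add_trivial[of q n h] by (subst card_Diff_subset) auto
  finally have len: "length gs = Omega q n h + k" .
  have "\<forall>g\<in>set gs. single_update q (n + k) g"
    using sw by (auto simp: gs_def intro!: single_update_upd[OF fm])
  moreover have "take n (fold (\<lambda>g y. g y) gs x) = h (take n x)" if x: "x \<in> states q (n + k)" for x
  proof -
    have "fold (upd f) (filter P w) x = fold (upd f) w x"
    proof (rule fold_filter_skip_identities, intro allI impI)
      fix j assume "j < length w" "\<not> P (w ! j)"
      then show "upd f (w ! j) (fold (upd f) (take j w) x) = fold (upd f) (take j w) x"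
        using upd_trivial_coordinate[OF sq x, of "w ! j" "take j w" "drop (Suc j) w"]
        by (simp add: P_def id_take_nth_drop)
    qed
    then show ?thesis
      using sq x by (simp add: gs_def fold_map comp_def sequentializes_def seq_apply_def)
  qed
  ultimately show ?thesis unfolding computes_with_def using len by blast
qed

lemma sequentialization_exists:
  assumes hm: "is_map q n h"
  shows "\<exists>f w. sequentializes q n (n + n) h f w"
proof -
  text \<open>First copy the input into the coordinates beyond n, then apply h to the copy.\<close>
  define f where "f y = map (\<lambda>i. if i < n then h (drop n y) ! i else y ! (i - n)) [0..<n+n]" for y
  have "sequentializes q n (n + n) h f ([n..<n+n] @ [0..<n])"
    unfolding sequentializes_def
  proof (intro conjI ballI)
    show "n \<le> n + n" by simp
    show "is_map q (n + n) f"
      using hm by (auto simp: is_map_def states_def f_def nth_append)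
    show "is_perm_word (n + n) ([n..<n+n] @ [0..<n])"
      by (auto simp: is_perm_word_def)
    fix y assume y: "y \<in> states q (n + n)"
    then have ly: "length y = n + n" by (simp add: states_def)
    have lh: "length (h (take n y)) = n"
      using hm y by (auto simp: is_map_def states_def)
    have copy: "fold (upd f) [n..<n+n] y = take n y @ take n y"
    proof (rule nth_equalityI)
      fix j assume "j < length (fold (upd f) [n..<n+n] y)"
      then show "fold (upd f) [n..<n+n] y ! j = (take n y @ take n y) ! j"
        using ly by (subst fold_upd_reads_outside[where v = "take n y @ take n y"])
          (auto simp: f_def nth_append)
    qed (use ly in simp)
    have "fold (upd f) [0..<n] (take n y @ take n y) = h (take n y) @ take n y"
    proof (rule nth_equalityI)
      fix j assume "j < length (fold (upd f) [0..<n] (take n y @ take n y))"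
      moreover have "f z ! i = (h (take n y) @ take n y) ! i"
        if "i \<in> set [0..<n]" "length z = length (take n y @ take n y)"
          "\<forall>j. j \<notin> set [0..<n] \<longrightarrow> z ! j = (take n y @ take n y) ! j" for i z
      proof -
        have "drop n z = take n y"
          using that(2,3) ly by (intro nth_equalityI) (auto simp: nth_append)
        then show ?thesis using that(1) lh by (simp add: f_def nth_append)
      qed
      ultimately show "fold (upd f) [0..<n] (take n y @ take n y) ! j = (h (take n y) @ take n y) ! j"
        using ly lh by (subst fold_upd_reads_outside[where v = "h (take n y) @ take n y"])
          (auto simp: nth_append)
    qed (use ly lh in simp)
    then show "take n (seq_apply f ([n..<n+n] @ [0..<n]) y) = h (take n y)"
      using copy lh by (simp add: seq_apply_def)
  qed
  then show ?thesis by blast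
qed

subsection \<open>From programs to sequentializations\<close>

locale update_program =
  fixes q n m :: nat and gs :: "(nat list \<Rightarrow> nat list) list"
  assumes q_pos: "0 < q" and n_le_m: "n \<le> m"
    and single_updates: "\<forall>g\<in>set gs. single_update q m g"
begin

definition written :: "nat \<Rightarrow> nat" where
  "written s = (SOME i. i < m \<and> (\<forall>x\<in>states q m. \<forall>j<m. j \<noteq> i \<longrightarrow> (gs ! s) x ! j = x ! j))"

definition new_value :: "nat \<Rightarrow> nat list \<Rightarrow> nat" where
  "new_value s x = (gs ! s) x ! written s"

primrec run :: "nat \<Rightarrow> nat list \<Rightarrow> nat list" where
  "run 0 x = x"
| "run (Suc s) x = (run s x)[written s := new_value s (run s x)]"

definition final_write :: "nat \<Rightarrow> bool" where
  "final_write s \<longleftrightarrow> written s < n \<and> (\<forall>s'. s < s' \<and> s' < length gs \<longrightarrow> written s' \<noteq> written s)"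

definition aux_rank :: "nat \<Rightarrow> nat" where
  "aux_rank s = card {s'. s' < s \<and> \<not> final_write s'}"

abbreviation n_aux :: nat where
  "n_aux \<equiv> aux_rank (length gs)"

definition slot :: "nat \<Rightarrow> nat" where
  "slot s = (if final_write s then written s else n + aux_rank s)"

text \<open>The state of the program before step s, rebuilt from the first n coordinates of y and
  the slots of the earlier steps. The program is correct for every initial content of its
  coordinates beyond n; the replay starts them at 0.\<close>
primrec replay :: "nat \<Rightarrow> nat list \<Rightarrow> nat list" where
  "replay 0 y = take n y @ replicate (m - n) 0"
| "replay (Suc s) y = (replay s y)[written s := y ! slot s]"

definition seq_map :: "nat list \<Rightarrow> nat list" where
  "seq_map y = map (\<lambda>p. if p \<in> slot ` {..<length gs}
       then let s = the_inv_into {..<length gs} slot p in new_value s (replay s y)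
       else y ! p) [0..<n + n_aux]"

definition seq_word :: "nat list" where
  "seq_word = map slot [0..<length gs] @ filter (\<lambda>p. p \<notin> slot ` {..<length gs}) [0..<n + n_aux]"

definition seq_prefix :: "nat list \<Rightarrow> nat \<Rightarrow> nat list" where
  "seq_prefix y j = fold (upd seq_map) (map slot [0..<j]) y"

lemma written_spec:
  assumes "s < length gs"
  shows "written s < m \<and> (\<forall>x\<in>states q m. \<forall>j<m. j \<noteq> written s \<longrightarrow> (gs ! s) x ! j = x ! j)"
proof -
  have "\<exists>i. i < m \<and> (\<forall>x\<in>states q m. \<forall>j<m. j \<noteq> i \<longrightarrow> (gs ! s) x ! j = x ! j)"
    using assms single_updates by (auto simp: single_update_def)
  then show ?thesis unfolding written_def by (rule someI_ex)
qed

lemma step_states: "s < length gs \<Longrightarrow> x \<in> states q m \<Longrightarrow> (gs ! s) x \<in> states q m"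
  using single_updates by (auto simp: single_update_def is_map_def)

lemma step_eq:
  assumes "s < length gs" "x \<in> states q m"
  shows "(gs ! s) x = x[written s := new_value s x]"
proof (rule nth_equalityI)
  show "length ((gs ! s) x) = length (x[written s := new_value s x])"
    using step_states[OF assms] assms(2) by (simp add: states_def)
  fix j assume "j < length ((gs ! s) x)"
  then have "j < m" using step_states[OF assms] by (simp add: states_def)
  then show "(gs ! s) x ! j = x[written s := new_value s x] ! j"
    using written_spec[OF assms(1)] assms(2)
    by (cases "j = written s") (auto simp: new_value_def states_def)
qed

lemma length_run [simp]: "length (run s x) = length x"
  by (induction s) auto

lemma run_states: "s \<le> length gs \<Longrightarrow> x \<in> states q m \<Longrightarrow> run s x \<in> states q m"
  by (induction s) (auto simp flip: step_eq intro: step_states)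

lemma fold_take_eq_run:
  "s \<le> length gs \<Longrightarrow> x \<in> states q m \<Longrightarrow> fold (\<lambda>g y. g y) (take s gs) x = run s x"
  by (induction s) (auto simp: take_Suc_conv_app_nth step_eq run_states)

lemma run_nth_unwritten: "\<forall>s'<s. written s' \<noteq> i \<Longrightarrow> run s x ! i = x ! i"
  by (induction s) auto

lemma aux_rank_less:
  assumes "s < s'" "\<not> final_write s"
  shows "aux_rank s < aux_rank s'"
  unfolding aux_rank_def using assms by (intro psubset_card_mono) auto

lemma slot_less: "s < length gs \<Longrightarrow> slot s < n + n_aux"
  using aux_rank_less[of s "length gs"] written_spec[of s] by (auto simp: slot_def final_write_def)

lemma slot_less_n: "slot s < n \<Longrightarrow> final_write s \<and> slot s = written s"
  by (auto simp: slot_def split: if_splits)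

lemma inj_on_slot: "inj_on slot {..<length gs}"
proof (rule linorder_inj_onI')
  fix s s' assume "s \<in> {..<length gs}" "s' \<in> {..<length gs}" "s < s'"
  then show "slot s \<noteq> slot s'"
    using aux_rank_less[of s s']
    by (cases "final_write s"; cases "final_write s'") (auto simp: slot_def final_write_def)
qed

lemma perm_seq_word: "is_perm_word (n + n_aux) seq_word"
proof -
  have "slot ` {..<length gs} \<subseteq> {..<n + n_aux}" using slot_less by auto
  then have "set seq_word = {..<n + n_aux}" by (force simp: seq_word_def)
  moreover have "distinct seq_word"
    using inj_on_slot by (auto simp: seq_word_def distinct_map lessThan_atLeast0)
  ultimately show ?thesis by (simp add: is_perm_word_def)
qed

lemma length_replay [simp]: "n \<le> length y \<Longrightarrow> length (replay s y) = m"
  using n_le_m by (induction s) auto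

lemma replay_0_nth: "n \<le> length y \<Longrightarrow> i < m \<Longrightarrow> replay 0 y ! i = (if i < n then y ! i else 0)"
  by (auto simp: nth_append)

lemma replay_states:
  assumes y: "y \<in> states q (n + n_aux)"
  shows "s \<le> length gs \<Longrightarrow> replay s y \<in> states q m"
proof (induction s)
  case 0
  then show ?case using q_pos n_le_m y replay_0_nth[of y] by (auto simp: states_def)
next
  case (Suc s)
  then have "replay s y \<in> states q m" "y ! slot s < q"
    using y slot_less[of s] by (auto simp: states_def)
  then show ?case
    by (auto simp: states_def) (metis nth_list_update_eq nth_list_update_neq)
qed

lemma new_value_less: "s < length gs \<Longrightarrow> x \<in> states q m \<Longrightarrow> new_value s x < q"
  using step_states written_spec unfolding new_value_def states_def by blast

lemma seq_map_nth_slot: "s < length gs \<Longrightarrow> seq_map y ! slot s = new_value s (replay s y)"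
  using slot_less[of s] the_inv_into_f_f[OF inj_on_slot, of s] by (simp add: seq_map_def)

lemma seq_map_nth_other: "p < n + n_aux \<Longrightarrow> p \<notin> slot ` {..<length gs} \<Longrightarrow> seq_map y ! p = y ! p"
  by (simp add: seq_map_def)

lemma is_map_seq_map: "is_map q (n + n_aux) seq_map"
  unfolding is_map_def
proof
  fix y assume y: "y \<in> states q (n + n_aux)"
  have "seq_map y ! p < q" if "p < n + n_aux" for p
  proof (cases "p \<in> slot ` {..<length gs}")
    case True
    then obtain s where "s < length gs" "p = slot s" by auto
    then show ?thesis using seq_map_nth_slot new_value_less replay_states[OF y] by simp
  next
    case False
    then show ?thesis using seq_map_nth_other that y by (simp add: states_def)
  qed
  then show "seq_map y \<in> states q (n + n_aux)" by (simp add: states_def seq_map_def)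
qed

lemma replay_cong:
  assumes "n \<le> length y" "n \<le> length y'" "\<forall>s'<s. y ! slot s' = y' ! slot s'"
  shows "i < m \<Longrightarrow> (i < n \<and> i \<notin> written ` {..<s} \<longrightarrow> y ! i = y' ! i)
           \<Longrightarrow> replay s y ! i = replay s y' ! i"
  using assms(3)
proof (induction s arbitrary: i)
  case 0
  then show ?case using replay_0_nth assms(1,2) by simp
next
  case (Suc s)
  show ?case
  proof (cases "i = written s")
    case True
    then show ?thesis using Suc.prems assms(1,2) by simp
  next
    case False
    then have "replay s y ! i = replay s y' ! i"
      using Suc.prems by (intro Suc.IH) (auto simp: lessThan_Suc)
    then show ?thesis using False by simp
  qed
qed

lemma length_seq_prefix [simp]: "length (seq_prefix y j) = length y"
  by (simp add: seq_prefix_def)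

lemma replay_seq_prefix:
  assumes ly: "length y = n + n_aux"
  shows "j \<le> length gs \<Longrightarrow> replay j (seq_prefix y j) = run j (replay 0 y)"
proof (induction j)
  case 0
  then show ?case by (simp add: seq_prefix_def)
next
  case (Suc j)
  let ?z = "seq_prefix y j" and ?z' = "seq_prefix y (Suc j)"
  let ?v = "new_value j (run j (replay 0 y))"
  have j: "j < length gs" and IH: "replay j ?z = run j (replay 0 y)" using Suc by auto
  have z': "?z' = ?z[slot j := ?v]"
    using IH seq_map_nth_slot[OF j] by (simp add: seq_prefix_def upd_def)
  have "replay j ?z' ! i = replay j ?z ! i" if "i < m" "i \<noteq> written j" for i
  proof (rule replay_cong)
    have "slot j \<noteq> slot s'" if "s' < j" for s'
      using inj_onD[OF inj_on_slot, of j s'] j that by auto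
    then show "\<forall>s'<j. ?z' ! slot s' = ?z ! slot s'" using z' by simp
    show "i < n \<and> i \<notin> written ` {..<j} \<longrightarrow> ?z' ! i = ?z ! i"
      using slot_less_n[of j] that z' by (cases "slot j < n") auto
  qed (use ly that in auto)
  moreover have "length (replay j ?z') = m" "length (replay j ?z) = m" using ly by simp_all
  ultimately have "(replay j ?z')[written j := ?v] = (replay j ?z)[written j := ?v]"
    using written_spec[OF j] by (intro nth_equalityI) (auto simp: nth_list_update)
  moreover have "?z' ! slot j = ?v" using z' slot_less[OF j] ly by simp
  ultimately show ?case using IH by simp
qed

lemma replay_nth_unchanged:
  assumes "n \<le> length y" "i < n"
  shows "\<forall>s. j \<le> s \<and> s < length gs \<longrightarrow> written s \<noteq> i \<Longrightarrow> replay j y ! i = y ! i"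
proof (induction j)
  case 0
  then show ?case using assms n_le_m by (simp add: nth_append)
next
  case (Suc j)
  show ?case
  proof (cases "written j = i")
    case True
    then have "slot j = i" using Suc.prems assms(2) by (auto simp: slot_def final_write_def)
    then show ?thesis using True assms n_le_m by simp
  next
    case False
    then have "\<forall>s. j \<le> s \<and> s < length gs \<longrightarrow> written s \<noteq> i"
      using Suc.prems by (metis Suc_leI le_eq_less_or_eq)
    then show ?thesis using Suc.IH False by simp
  qed
qed

lemma final_write_exists:
  assumes "s < length gs" "written s < n"
  shows "\<exists>s'<length gs. final_write s' \<and> written s' = written s"
proof -
  let ?S = "{s'. s' < length gs \<and> written s' = written s}"
  have "Max ?S \<in> ?S" using assms(1) by (intro Max_in) auto
  moreover have "s' \<le> Max ?S" if "s' \<in> ?S" for s' using that by (intro Max_ge) auto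
  ultimately show ?thesis using assms(2) by (auto simp: final_write_def not_le[symmetric])
qed

end

locale correct_update_program = update_program +
  fixes h :: "nat list \<Rightarrow> nat list"
  assumes correct: "\<forall>x\<in>states q m. take n (fold (\<lambda>g y. g y) gs x) = h (take n x)"
begin

lemma sequentializes_seq_map: "sequentializes q n (n + n_aux) h seq_map seq_word"
  unfolding sequentializes_def
proof (intro conjI ballI)
  show "n \<le> n + n_aux" by simp
  show "is_map q (n + n_aux) seq_map" by (rule is_map_seq_map)
  show "is_perm_word (n + n_aux) seq_word" by (rule perm_seq_word)
  fix y assume y: "y \<in> states q (n + n_aux)"
  then have ly: "length y = n + n_aux" by (simp add: states_def)
  let ?z = "seq_prefix y (length gs)"
  have "fold (upd seq_map) (filter (\<lambda>p. p \<notin> slot ` {..<length gs}) [0..<n + n_aux]) ?z = ?z"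
    using seq_map_nth_other by (intro fold_upd_fixpoint) (auto simp: upd_def)
  then have "seq_apply seq_map seq_word y = ?z"
    by (simp add: seq_apply_def seq_word_def seq_prefix_def)
  moreover have "take n ?z = take n (replay (length gs) ?z)"
    using replay_nth_unchanged[of ?z] ly n_le_m by (intro nth_equalityI) auto
  moreover have "replay (length gs) ?z = run (length gs) (replay 0 y)"
    using replay_seq_prefix ly by simp
  moreover have "take n (run (length gs) (replay 0 y)) = h (take n y)"
    using correct replay_states[OF y, of 0] fold_take_eq_run[of "length gs"] ly by simp
  ultimately show "take n (seq_apply seq_map seq_word y) = h (take n y)" by simp
qed

lemma written_if_nontrivial:
  assumes i: "i < n" "\<exists>x\<in>states q n. h x ! i \<noteq> x ! i"
  shows "\<exists>s<length gs. written s = i"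
proof (rule ccontr)
  assume unwritten: "\<not> (\<exists>s<length gs. written s = i)"
  obtain x where x: "x \<in> states q n" "h x ! i \<noteq> x ! i" using i(2) by blast
  let ?x = "x @ replicate (m - n) 0"
  have "?x \<in> states q m" using x q_pos n_le_m by (auto simp: states_def nth_append)
  then have "h x = take n (run (length gs) ?x)"
    using correct fold_take_eq_run[of "length gs"] x by (simp add: states_def)
  then have "h x ! i = ?x ! i" using run_nth_unwritten unwritten i(1) by simp
  then show False using x i(1) by (simp add: nth_append states_def)
qed

lemma Omega_add_n_aux_le: "Omega q n h + n_aux \<le> length gs"
proof -
  define D where "D = {s. s < length gs \<and> final_write s}"
  have "{i. i < n \<and> \<not> (\<forall>x\<in>states q n. h x ! i = x ! i)} \<subseteq> written ` D"
  proof
    fix i assume "i \<in> {i. i < n \<and> \<not> (\<forall>x\<in>states q n. h x ! i = x ! i)}"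
    then obtain s where "s < length gs" "written s = i" "i < n"
      using written_if_nontrivial by blast
    then obtain s' where "s' < length gs" "final_write s'" "written s' = i"
      using final_write_exists by blast
    then show "i \<in> written ` D" by (auto simp: D_def)
  qed
  then have "Omega q n h \<le> card (written ` D)"
    unfolding Omega_def by (intro card_mono) (auto simp: D_def)
  also have "\<dots> \<le> card D" by (rule card_image_le) (simp add: D_def)
  also have "card D + n_aux = length gs"
  proof -
    have "{..<length gs} = D \<union> {s. s < length gs \<and> \<not> final_write s}" by (auto simp: D_def)
    then have "length gs = card (D \<union> {s. s < length gs \<and> \<not> final_write s})"
      by (metis card_lessThan)
    also have "\<dots> = card D + n_aux"
      unfolding aux_rank_def by (rule card_Un_disjoint) (auto simp: D_def)
    finally show ?thesis by simp
  qed
  finally show ?thesis by simp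
qed

end

lemma sequentialization_of_computes_with:
  assumes "0 < q" "n \<le> m" "computes_with q n h m t"
  shows "\<exists>k. Omega q n h + k \<le> t \<and> (\<exists>f w. sequentializes q n (n + k) h f w)"
proof -
  obtain gs where gs: "length gs = t" "\<forall>g\<in>set gs. single_update q m g"
    "\<forall>x\<in>states q m. take n (fold (\<lambda>g y. g y) gs x) = h (take n x)"
    using assms(3) unfolding computes_with_def by blast
  interpret correct_update_program q n m gs h
    using assms(1,2) gs(2,3) by unfold_locales
  show ?thesis
    using sequentializes_seq_map Omega_add_n_aux_le gs(1) by blast
qed

lemma kappa_min_sequentializes:
  assumes "is_map q n h"
  shows "\<exists>f w. sequentializes q n (n + kappa_min q n h) h f w"
  unfolding kappa_min_def by (rule LeastI_ex) (use sequentialization_exists[OF assms] in blast)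

lemma kappa_min_le: "sequentializes q n (n + k) h f w \<Longrightarrow> kappa_min q n h \<le> k"
  unfolding kappa_min_def by (rule Least_le) blast

text \<open>The argument uses only q > 0.\<close>

theorem mainTheorem7:
  fixes q n :: nat and h :: "nat list \<Rightarrow> nat list"
  assumes "q \<ge> 2" and "n \<ge> 1" and "is_map q n h"
  shows "Lstar q n h = L q n h (n + kappa_min q n h) \<and>
         L q n h (n + kappa_min q n h) = Omega q n h + kappa_min q n h"
proof -
  define \<kappa> where "\<kappa> = kappa_min q n h"
  have upper: "computes_with q n h (n + \<kappa>) (Omega q n h + \<kappa>)"
    using kappa_min_sequentializes[OF assms(3)] computes_with_sequentialization
    unfolding \<kappa>_def by blast
  have lower: "Omega q n h + \<kappa> \<le> t" if prog: "n \<le> m" "computes_with q n h m t" for m t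
  proof -
    obtain k f w where "Omega q n h + k \<le> t" "sequentializes q n (n + k) h f w"
      using sequentialization_of_computes_with[OF _ prog] assms(1) by auto
    then show ?thesis using kappa_min_le unfolding \<kappa>_def by fastforce
  qed
  have "L q n h (n + \<kappa>) = Omega q n h + \<kappa>"
    unfolding L_def by (rule Least_equality) (use upper lower[of "n + \<kappa>"] in auto)
  moreover have "Lstar q n h = Omega q n h + \<kappa>"
    unfolding Lstar_def
  proof (rule Least_equality)
    show "\<exists>m\<ge>n. computes_with q n h m (Omega q n h + \<kappa>)" using upper le_add1 by blast
  qed (use lower in blast)
  ultimately show ?thesis by (simp add: \<kappa>_def)
qed

end
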